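(* Let $q$ be an acyclic Boolean conjunctive query. If each cycle in the attack graph of $q$ is terminal, then each cycle in the attack graph of $q$ has length $2$.
   Context: Atoms have variables or constants as arguments; each relation name has a signature $[n,k]$ with primary key positions $1,\dots,k$. $\mathit{key}(F)$ is the set of variables in the primary-key positions of atom $F$, $\mathit{vars}(F)$ its set of variables. A Boolean conjunctive query $q$ is a finite set of atoms; $\mathit{vars}(q)$ its variables. A join tree for $q$ is an undirected tree on the atoms of $q$ such that whenever a variable occurs in atoms $F$ and $G$ it occurs in every atom on the path between them; the edge between $F$ and $G$ is labeled $\mathit{vars}(F)\cap\mathit{vars}(G)$. $q$ is acyclic if it has a join tree. $\mathit{FD}(q)=\{\mathit{key}(F)\to\mathit{vars}(F)\mid F\in q\}$ and $F^{+,q}=\{x\in\mathit{vars}(q)\mid \mathit{FD}(q\setminus\{F\})\models\mathit{key}(F)\to x\}$. The attack graph of $q$, computed from any join tree $\tau$ (independent of the choice), has an edge $F\to G$ for distinct atoms iff every label $L$ on the path between $F$ and $G$ in $\tau$ satisfies $L\not\subseteq F^{+,q}$. A cycle of length $n$ is a sequence of edges $F_0\to\dots\to F_{n-1}\to F_0$ with pairwise distinct $F_i$; it is terminal if there is no edge from a vertex of the cycle to a vertex outside the cycle. *)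

theory Defs
  imports Main
begin

datatype ('v, 'c) qterm = Var 'v | Const 'c

datatype ('r, 'v, 'c) atom = Atom (rel: 'r) (args: "('v, 'c) qterm list")

(* A signature assigns to each relation name a pair (n, k): arity n,
   primary key positions 1..k. *)
type_synonym 'r signature = "'r \<Rightarrow> nat \<times> nat"

definition wf_atom :: "'r signature \<Rightarrow> ('r, 'v, 'c) atom \<Rightarrow> bool" where
  "wf_atom sig F \<longleftrightarrow> length (args F) = fst (sig (rel F)) \<and> 1 \<le> snd (sig (rel F))
                     \<and> snd (sig (rel F)) \<le> fst (sig (rel F))"

definition vars :: "('r, 'v, 'c) atom \<Rightarrow> 'v set" where
  "vars F = {x. Var x \<in> set (args F)}"

definition key :: "'r signature \<Rightarrow> ('r, 'v, 'c) atom \<Rightarrow> 'v set" where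
  "key sig F = {x. \<exists>i < snd (sig (rel F)). i < length (args F) \<and> args F ! i = Var x}"

definition qvars :: "('r, 'v, 'c) atom set \<Rightarrow> 'v set" where
  "qvars q = (\<Union>F\<in>q. vars F)"

definition bcq :: "'r signature \<Rightarrow> ('r, 'v, 'c) atom set \<Rightarrow> bool" where
  "bcq sig q \<longleftrightarrow> finite q \<and> (\<forall>F\<in>q. wf_atom sig F)"

(* Functional dependencies: pairs (X, Y) meaning X \<rightarrow> Y.
   Sigma \<Turnstile> X \<rightarrow> x  iff x lies in the attribute closure of X under Sigma. *)
inductive_set fd_closure :: "('v set \<times> 'v set) set \<Rightarrow> 'v set \<Rightarrow> 'v set"
  for \<Sigma> :: "('v set \<times> 'v set) set" and X :: "'v set" where
  base: "x \<in> X \<Longrightarrow> x \<in> fd_closure \<Sigma> X"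
| step: "(A, B) \<in> \<Sigma> \<Longrightarrow> (\<And>a. a \<in> A \<Longrightarrow> a \<in> fd_closure \<Sigma> X) \<Longrightarrow> y \<in> B \<Longrightarrow> y \<in> fd_closure \<Sigma> X"

definition FD :: "'r signature \<Rightarrow> ('r, 'v, 'c) atom set \<Rightarrow> ('v set \<times> 'v set) set" where
  "FD sig q = {(key sig F, vars F) | F. F \<in> q}"

definition plus_closure :: "'r signature \<Rightarrow> ('r, 'v, 'c) atom set \<Rightarrow> ('r, 'v, 'c) atom \<Rightarrow> 'v set" where
  "plus_closure sig q F = {x \<in> qvars q. x \<in> fd_closure (FD sig (q - {F})) (key sig F)}"

(* Undirected graphs: edges are two-element sets of vertices *)
definition is_path :: "'a set set \<Rightarrow> 'a \<Rightarrow> 'a \<Rightarrow> 'a list \<Rightarrow> bool" where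
  "is_path E a b p \<longleftrightarrow> p \<noteq> [] \<and> hd p = a \<and> last p = b \<and> distinct p \<and>
     (\<forall>i. Suc i < length p \<longrightarrow> {p ! i, p ! Suc i} \<in> E)"

definition is_tree :: "'a set \<Rightarrow> 'a set set \<Rightarrow> bool" where
  "is_tree V E \<longleftrightarrow> (\<forall>e\<in>E. \<exists>a b. e = {a, b} \<and> a \<noteq> b \<and> a \<in> V \<and> b \<in> V) \<and>
     (\<forall>a\<in>V. \<forall>b\<in>V. \<exists>!p. is_path E a b p)"

definition join_tree :: "('r, 'v, 'c) atom set \<Rightarrow> ('r, 'v, 'c) atom set set \<Rightarrow> bool" where
  "join_tree q E \<longleftrightarrow> is_tree q E \<and>
     (\<forall>F\<in>q. \<forall>G\<in>q. \<forall>p x. is_path E F G p \<longrightarrow> x \<in> vars F \<longrightarrow> x \<in> vars G \<longrightarrow>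
        (\<forall>H\<in>set p. x \<in> vars H))"

definition acyclic_query :: "('r, 'v, 'c) atom set \<Rightarrow> bool" where
  "acyclic_query q \<longleftrightarrow> (\<exists>E. join_tree q E)"

definition label :: "('r, 'v, 'c) atom \<Rightarrow> ('r, 'v, 'c) atom \<Rightarrow> 'v set" where
  "label F G = vars F \<inter> vars G"

definition attacks :: "'r signature \<Rightarrow> ('r, 'v, 'c) atom set \<Rightarrow> ('r, 'v, 'c) atom set set
                       \<Rightarrow> ('r, 'v, 'c) atom \<Rightarrow> ('r, 'v, 'c) atom \<Rightarrow> bool" where
  "attacks sig q E F G \<longleftrightarrow> F \<in> q \<and> G \<in> q \<and> F \<noteq> G \<and>
     (\<forall>p. is_path E F G p \<longrightarrow>
        (\<forall>i. Suc i < length p \<longrightarrow> \<not> (label (p ! i) (p ! Suc i) \<subseteq> plus_closure sig q F)))"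

definition is_cycle :: "('a \<Rightarrow> 'a \<Rightarrow> bool) \<Rightarrow> 'a list \<Rightarrow> bool" where
  "is_cycle att cs \<longleftrightarrow> cs \<noteq> [] \<and> distinct cs \<and>
     (\<forall>i < length cs. att (cs ! i) (cs ! ((Suc i) mod length cs)))"

definition terminal_cycle :: "('a \<Rightarrow> 'a \<Rightarrow> bool) \<Rightarrow> 'a list \<Rightarrow> bool" where
  "terminal_cycle att cs \<longleftrightarrow> is_cycle att cs \<and>
     (\<forall>F\<in>set cs. \<forall>G. att F G \<longrightarrow> G \<in> set cs)"

end

theory Submission
  imports Defs
begin

text \<open>
  The core is a converse-of-transitivity property: if \<open>F \<rightarrow> G \<rightarrow> H\<close> and \<open>F \<not>\<rightarrow> H\<close> with
  \<open>F \<noteq> H\<close>, then \<open>G \<rightarrow> F\<close>. Given it, a cycle \<open>F\<^sub>0 \<rightarrow> F\<^sub>1 \<rightarrow> F\<^sub>2 \<rightarrow> \<dots>\<close> of length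
  at least 3 has either \<open>F\<^sub>0 \<rightarrow> F\<^sub>2\<close>, and then skipping \<open>F\<^sub>1\<close> yields a cycle that
  \<open>F\<^sub>0 \<rightarrow> F\<^sub>1\<close> leaves, or \<open>F\<^sub>1 \<rightarrow> F\<^sub>0\<close>, and then \<open>{F\<^sub>0, F\<^sub>1}\<close> is a 2-cycle that
  \<open>F\<^sub>1 \<rightarrow> F\<^sub>2\<close> leaves; either way terminality fails.

  For the converse property, suppose \<open>G \<not>\<rightarrow> F\<close>: some edge \<open>e'\<close> on the tree path from \<open>G\<close>
  to \<open>F\<close> has label inside \<open>G\<^sup>+\<close>. Cutting \<open>e'\<close> splits the join tree into the side \<open>C\<close>
  of \<open>F\<close> and the side of \<open>G\<close>, and variables shared across the cut lie in the label of
  \<open>e'\<close>. The path from \<open>G\<close> to \<open>H\<close> avoids \<open>e'\<close> (as \<open>G \<rightarrow> H\<close>), and the edge \<open>e\<close> witnessing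
  \<open>F \<not>\<rightarrow> H\<close> cannot lie on the path from \<open>F\<close> to \<open>G\<close> (as \<open>F \<rightarrow> G\<close>), so \<open>e\<close> lies on the
  \<open>G\<close>-side. Following the derivation of \<open>F\<^sup>+\<close> shows that it meets every atom outside \<open>C\<close>
  only in \<open>G\<^sup>+\<close>: atoms on \<open>C\<close> contribute only through the cut label, and the atom \<open>G\<close>
  never fires because \<open>key G \<not>\<subseteq> F\<^sup>+\<close>. Hence the label of \<open>e\<close> is inside \<open>G\<^sup>+\<close>,
  contradicting \<open>G \<rightarrow> H\<close>.
\<close>

definition reachable :: "'a set set \<Rightarrow> 'a \<Rightarrow> 'a \<Rightarrow> bool" where
  "reachable E a b \<longleftrightarrow> (\<exists>p. is_path E a b p)"

definition path_edges :: "'a list \<Rightarrow> 'a set set" where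
  "path_edges p = {{p ! i, p ! Suc i} | i. Suc i < length p}"

lemma is_path_iff_successively:
  "is_path E a b p \<longleftrightarrow>
     p \<noteq> [] \<and> hd p = a \<and> last p = b \<and> distinct p \<and> successively (\<lambda>x y. {x, y} \<in> E) p"
  by (auto simp: is_path_def successively_conv_nth)

lemma is_path_minus_edge_iff:
  "is_path (E - {e}) a b p \<longleftrightarrow> is_path E a b p \<and> e \<notin> path_edges p"
  by (auto simp: is_path_def path_edges_def)

lemma path_edge_subset_set: "e \<in> path_edges p \<Longrightarrow> e \<subseteq> set p"
  by (auto simp: path_edges_def)

lemma successively_remove_loops:
  assumes "successively R p" "p \<noteq> []"
  obtains p' where "successively R p'" "distinct p'" "p' \<noteq> []" "hd p' = hd p" "last p' = last p"
  using assms
proof (induction "length p" arbitrary: p rule: less_induct)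
  case less
  show ?case
  proof (cases "distinct p")
    case True
    with less.prems show ?thesis by blast
  next
    case False
    then obtain xs y ys zs where p: "p = xs @ [y] @ ys @ [y] @ zs"
      using not_distinct_decomp by blast
    have "successively R (y # zs)"
      using less.prems(2) successively_append_iff[of R "y # ys" "y # zs"]
      unfolding p by (simp add: successively_append_iff)
    then have "successively R (xs @ y # zs)"
      using less.prems(2) unfolding p by (auto simp: successively_append_iff)
    moreover have "hd (xs @ y # zs) = hd p" "last (xs @ y # zs) = last p"
      unfolding p by (cases xs; simp) (cases zs; simp)
    ultimately show ?thesis
      using less.hyps[of "xs @ y # zs"] less.prems(1) p by fastforce
  qed
qed

lemma reachable_refl: "reachable E a a"
  unfolding reachable_def is_path_def by (rule exI[of _ "[a]"]) simp

lemma reachable_sym: "reachable E a b \<Longrightarrow> reachable E b a"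
proof -
  assume "reachable E a b"
  then obtain p where "is_path E a b p" unfolding reachable_def by blast
  then have "is_path E b a (rev p)"
    unfolding is_path_iff_successively by (simp add: hd_rev last_rev insert_commute)
  then show ?thesis unfolding reachable_def by blast
qed

lemma reachable_trans:
  assumes "reachable E a b" "reachable E b c"
  shows "reachable E a c"
proof -
  obtain p r where p: "is_path E a b p" and r: "is_path E b c r"
    using assms unfolding reachable_def by blast
  then obtain r' where r': "r = b # r'"
    by (metis is_path_def list.collapse)
  have "successively (\<lambda>x y. {x, y} \<in> E) (p @ r')"
    using p r unfolding r' is_path_iff_successively by (auto simp: successively_append_iff successively_Cons)
  moreover have "hd (p @ r') = a" "last (p @ r') = c"
    using p r unfolding r' is_path_def by auto
  moreover have "p @ r' \<noteq> []"
    using p by (simp add: is_path_def)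
  ultimately obtain p' where "successively (\<lambda>x y. {x, y} \<in> E) p'" "distinct p'" "p' \<noteq> []"
    "hd p' = a" "last p' = c"
    by (metis successively_remove_loops)
  then show ?thesis
    unfolding reachable_def is_path_iff_successively by blast
qed

lemma reachable_path_member:
  assumes "is_path E a b p" "v \<in> set p"
  shows "reachable E a v"
proof -
  obtain xs ys where p: "p = xs @ v # ys"
    using assms(2) by (meson split_list)
  have "is_path E a v (xs @ [v])"
    using assms(1) unfolding p is_path_iff_successively
    by (auto simp: successively_append_iff hd_append split: if_splits)
  then show ?thesis unfolding reachable_def by blast
qed

lemma path_last_edge:
  assumes "is_path E a b p" "a \<noteq> b"
  obtains c where "{c, b} \<in> path_edges p"
proof -
  have "length p \<ge> 2"
    using assms unfolding is_path_def
    by (cases p) (auto simp: Suc_le_eq)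
  then have "Suc (length p - 2) < length p" "Suc (length p - 2) = length p - 1"
    by auto
  moreover have "b = p ! (length p - 1)"
    using assms(1) unfolding is_path_def by (auto simp: last_conv_nth)
  ultimately have "{p ! (length p - 2), b} \<in> path_edges p"
    unfolding path_edges_def by (metis (mono_tags, lifting) mem_Collect_eq)
  then show ?thesis by (rule that)
qed

lemma tree_pathE:
  assumes "is_tree V E" "a \<in> V" "b \<in> V"
  obtains p where "is_path E a b p"
  using assms unfolding is_tree_def by blast

lemma tree_path_subset:
  assumes "is_tree V E" "is_path E a b p" "a \<in> V"
  shows "set p \<subseteq> V"
proof
  fix v assume "v \<in> set p"
  then obtain k where k: "k < length p" "p ! k = v" by (auto simp: in_set_conv_nth)
  show "v \<in> V"
  proof (cases k)
    case 0
    then show ?thesis using assms(2,3) k by (auto simp: is_path_def hd_conv_nth)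
  next
    case (Suc m)
    then have "{p ! m, v} \<in> E" using assms(2) k by (auto simp: is_path_def)
    then show ?thesis using assms(1) by (auto simp: is_tree_def doubleton_eq_iff)
  qed
qed

lemma tree_reachable_minus_edge_iff:
  assumes "is_tree V E" "a \<in> V" "b \<in> V" "is_path E a b p"
  shows "reachable (E - {e}) a b \<longleftrightarrow> e \<notin> path_edges p"
proof
  assume "reachable (E - {e}) a b"
  then obtain r where r: "is_path (E - {e}) a b r" unfolding reachable_def by blast
  then have "r = p"
    using assms unfolding is_tree_def is_path_minus_edge_iff by blast
  then show "e \<notin> path_edges p" using r by (simp add: is_path_minus_edge_iff)
next
  assume "e \<notin> path_edges p"
  then show "reachable (E - {e}) a b"
    using assms(4) unfolding reachable_def is_path_minus_edge_iff by blast
qed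

lemma join_tree_cut_separates:
  assumes jt: "join_tree q E" and "K1 \<in> q" "K2 \<in> q"
    and cut: "\<not> reachable (E - {{A, B}}) K1 K2"
    and "x \<in> vars K1" "x \<in> vars K2"
  shows "x \<in> label A B"
proof -
  have tree: "is_tree q E" using jt by (simp add: join_tree_def)
  obtain p where p: "is_path E K1 K2 p"
    using tree_pathE[OF tree assms(2,3)] .
  have "{A, B} \<subseteq> set p"
    using tree_reachable_minus_edge_iff[OF tree assms(2,3) p] cut path_edge_subset_set by blast
  then show ?thesis
    using jt assms(2,3,5,6) p unfolding join_tree_def label_def by blast
qed

lemma fd_closure_subsetI:
  "(A, B) \<in> \<Sigma> \<Longrightarrow> A \<subseteq> fd_closure \<Sigma> X \<Longrightarrow> B \<subseteq> fd_closure \<Sigma> X"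
  by (blast intro: fd_closure.step)

lemma key_subset_vars: "key sig F \<subseteq> vars F"
  unfolding key_def vars_def by (auto dest: nth_mem[of _ "args F"])

lemma attacks_iff_path_edges:
  "attacks sig q E F G \<longleftrightarrow> F \<in> q \<and> G \<in> q \<and> F \<noteq> G \<and>
     (\<forall>p A B. is_path E F G p \<longrightarrow> {A, B} \<in> path_edges p \<longrightarrow>
        \<not> label A B \<subseteq> plus_closure sig q F)"
proof -
  have "label A B = label (p ! i) (p ! Suc i)"
    if "{A, B} = {p ! i, p ! Suc i}" for A B :: "('r, 'v, 'c) atom" and p i
    using that by (auto simp: doubleton_eq_iff label_def)
  then show ?thesis
    unfolding attacks_def path_edges_def by blast
qed

lemma attacks_path_edge:
  "attacks sig q E F G \<Longrightarrow> is_path E F G p \<Longrightarrow> {A, B} \<in> path_edges p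
     \<Longrightarrow> \<not> label A B \<subseteq> plus_closure sig q F"
  unfolding attacks_iff_path_edges by blast

lemma not_attacksE:
  assumes "\<not> attacks sig q E F G" "F \<in> q" "G \<in> q" "F \<noteq> G"
  obtains p A B where "is_path E F G p" "{A, B} \<in> path_edges p"
    "label A B \<subseteq> plus_closure sig q F"
  using assms unfolding attacks_iff_path_edges by blast

lemma attacks_not_key_closed:
  assumes tree: "is_tree q E" and att: "attacks sig q E F G"
  shows "\<not> key sig G \<subseteq> fd_closure (FD sig (q - {F})) (key sig F)"
proof
  assume key: "key sig G \<subseteq> fd_closure (FD sig (q - {F})) (key sig F)"
  have Fq: "F \<in> q" and Gq: "G \<in> q" and "F \<noteq> G"
    using att by (auto simp: attacks_def)
  then have "vars G \<subseteq> fd_closure (FD sig (q - {F})) (key sig F)"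
    using fd_closure_subsetI[OF _ key] by (auto simp: FD_def)
  then have vars_G: "vars G \<subseteq> plus_closure sig q F"
    using Gq by (auto simp: plus_closure_def qvars_def)
  obtain p where p: "is_path E F G p"
    using tree_pathE[OF tree Fq Gq] .
  obtain H where "{H, G} \<in> path_edges p"
    using path_last_edge[OF p \<open>F \<noteq> G\<close>] by blast
  moreover have "label H G \<subseteq> plus_closure sig q F"
    using vars_G by (auto simp: label_def)
  ultimately show False
    using attacks_path_edge[OF att p] by blast
qed

lemma fd_closure_transfer_across_cut:
  assumes F: "F \<in> C"
    and sep: "\<And>K1 K2. K1 \<in> C \<Longrightarrow> K2 \<in> q - C \<Longrightarrow> vars K1 \<inter> vars K2 \<subseteq> L"
    and L: "L \<subseteq> fd_closure (FD sig (q - {G})) (key sig G)"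
    and key: "\<not> key sig G \<subseteq> fd_closure (FD sig (q - {F})) (key sig F)"
    and "D \<in> q - C"
  shows "fd_closure (FD sig (q - {F})) (key sig F) \<inter> vars D
           \<subseteq> fd_closure (FD sig (q - {G})) (key sig G)"
proof -
  have "x \<in> fd_closure (FD sig (q - {G})) (key sig G)"
    if "x \<in> fd_closure (FD sig (q - {F})) (key sig F)" "K \<in> q - C" "x \<in> vars K" for x K
    using that
  proof (induction arbitrary: K rule: fd_closure.induct)
    case (base x)
    then have "x \<in> vars F \<inter> vars K"
      using key_subset_vars by fast
    then show ?case
      using sep[OF F base(2)] L by blast
  next
    case (step A B y K)
    then obtain K' where K': "K' \<in> q" "K' \<noteq> F" "A = key sig K'" "B = vars K'"
      by (auto simp: FD_def)
    show ?case
    proof (cases "K' \<in> C")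
      case True
      then have "y \<in> vars K' \<inter> vars K"
        using step.hyps(3) step.prems(2) K'(4) by blast
      then show ?thesis
        using sep[OF True step.prems(1)] L by blast
    next
      case False
      have "key sig K' \<subseteq> fd_closure (FD sig (q - {G})) (key sig G)"
      proof
        fix a assume "a \<in> key sig K'"
        then show "a \<in> fd_closure (FD sig (q - {G})) (key sig G)"
          using step.IH[of a K'] K' False key_subset_vars[of sig K'] by auto
      qed
      moreover have "K' \<noteq> G"
        using step.hyps(2) K'(3) key by blast
      then have "(key sig K', vars K') \<in> FD sig (q - {G})"
        using K'(1) by (auto simp: FD_def)
      ultimately show ?thesis
        using fd_closure_subsetI step.hyps(3) K'(4) by blast
    qed
  qed
  then show ?thesis using assms(5) by blast
qed

lemma attacks_converse_if_not_transitive: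
  assumes jt: "join_tree q E"
    and FG: "attacks sig q E F G" and GH: "attacks sig q E G H"
    and "F \<noteq> H" and FH: "\<not> attacks sig q E F H"
  shows "attacks sig q E G F"
proof (rule ccontr)
  assume GF: "\<not> attacks sig q E G F"
  have tree: "is_tree q E" using jt by (simp add: join_tree_def)
  have Fq: "F \<in> q" and Gq: "G \<in> q" and Hq: "H \<in> q" and "G \<noteq> F"
    using FG GH by (auto simp: attacks_def)
  obtain pGF A1 A2 where pGF: "is_path E G F pGF" and cut_GF: "{A1, A2} \<in> path_edges pGF"
    and cut_label: "label A1 A2 \<subseteq> plus_closure sig q G"
    using not_attacksE[OF GF Gq Fq \<open>G \<noteq> F\<close>] by blast
  obtain pFH B1 B2 where pFH: "is_path E F H pFH" and e_FH: "{B1, B2} \<in> path_edges pFH"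
    and e_label: "label B1 B2 \<subseteq> plus_closure sig q F"
    using not_attacksE[OF FH Fq Hq \<open>F \<noteq> H\<close>] by blast
  obtain pFG where pFG: "is_path E F G pFG" using tree_pathE[OF tree Fq Gq] .
  obtain pGH where pGH: "is_path E G H pGH" using tree_pathE[OF tree Gq Hq] .
  define E' where "E' = E - {{A1, A2}}"
  define C where "C = {K \<in> q. reachable E' F K}"
  have "\<not> reachable E' G F"
    using tree_reachable_minus_edge_iff[OF tree Gq Fq pGF] cut_GF unfolding E'_def by blast
  then have "G \<notin> C"
    by (auto simp: C_def dest: reachable_sym)
  have "{A1, A2} \<notin> path_edges pGH"
    using attacks_path_edge[OF GH pGH, of A1 A2] cut_label by blast
  then have "is_path E' G H pGH"
    using pGH unfolding E'_def is_path_minus_edge_iff by blast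
  have pGH_outside: "K \<notin> C" if "K \<in> set pGH" for K
  proof
    assume "K \<in> C"
    then have "reachable E' F K" by (simp add: C_def)
    moreover have "reachable E' K G"
      using reachable_path_member[OF \<open>is_path E' G H pGH\<close> that] by (rule reachable_sym)
    ultimately have "reachable E' F G" by (rule reachable_trans)
    then show False using \<open>G \<notin> C\<close> Gq by (simp add: C_def)
  qed
  have e_GH: "{B1, B2} \<in> path_edges pGH"
  proof (rule ccontr)
    assume "{B1, B2} \<notin> path_edges pGH"
    moreover have "{B1, B2} \<notin> path_edges pFG"
      using attacks_path_edge[OF FG pFG, of B1 B2] e_label by blast
    ultimately have "is_path (E - {{B1, B2}}) F G pFG" "is_path (E - {{B1, B2}}) G H pGH"
      using pFG pGH by (simp_all add: is_path_minus_edge_iff)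
    then have "reachable (E - {{B1, B2}}) F G" "reachable (E - {{B1, B2}}) G H"
      unfolding reachable_def by blast+
    then have "reachable (E - {{B1, B2}}) F H" by (rule reachable_trans)
    then show False
      using tree_reachable_minus_edge_iff[OF tree Fq Hq pFH] e_FH by blast
  qed
  then have "B1 \<in> set pGH"
    using path_edge_subset_set by blast
  then have B1: "B1 \<in> q - C"
    using tree_path_subset[OF tree pGH Gq] pGH_outside by blast
  have "fd_closure (FD sig (q - {F})) (key sig F) \<inter> vars B1
          \<subseteq> fd_closure (FD sig (q - {G})) (key sig G)"
  proof (rule fd_closure_transfer_across_cut[OF _ _ _ _ B1])
    show "F \<in> C" using Fq by (simp add: C_def reachable_refl)
    show "vars K1 \<inter> vars K2 \<subseteq> label A1 A2" if "K1 \<in> C" "K2 \<in> q - C" for K1 K2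
    proof -
      have K1: "K1 \<in> q" "reachable (E - {{A1, A2}}) F K1" and K2: "K2 \<in> q"
        using that by (auto simp: C_def E'_def)
      have "\<not> reachable (E - {{A1, A2}}) K1 K2"
      proof
        assume "reachable (E - {{A1, A2}}) K1 K2"
        with K1(2) have "reachable (E - {{A1, A2}}) F K2" by (rule reachable_trans)
        then show False using that(2) by (simp add: C_def E'_def)
      qed
      then show ?thesis
        using join_tree_cut_separates[OF jt K1(1) K2] by blast
    qed
    show "label A1 A2 \<subseteq> fd_closure (FD sig (q - {G})) (key sig G)"
      using cut_label unfolding plus_closure_def by blast
    show "\<not> key sig G \<subseteq> fd_closure (FD sig (q - {F})) (key sig F)"
      using attacks_not_key_closed[OF tree FG] .
  qed
  then have "label B1 B2 \<subseteq> plus_closure sig q G"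
    using e_label by (auto simp: label_def plus_closure_def)
  then show False
    using attacks_path_edge[OF GH pGH e_GH] by blast
qed

lemma is_cycle_iff_successively:
  "is_cycle att cs \<longleftrightarrow> cs \<noteq> [] \<and> distinct cs \<and> successively att cs \<and> att (last cs) (hd cs)"
proof (cases "cs = []")
  case False
  let ?n = "length cs"
  have "(\<forall>i<?n. att (cs ! i) (cs ! (Suc i mod ?n))) \<longleftrightarrow>
        (\<forall>i. Suc i < ?n \<longrightarrow> att (cs ! i) (cs ! Suc i)) \<and> att (cs ! (?n - 1)) (cs ! 0)"
  proof safe
    fix i assume "\<forall>i<?n. att (cs ! i) (cs ! (Suc i mod ?n))" "Suc i < ?n"
    then show "att (cs ! i) (cs ! Suc i)" by (metis Suc_lessD mod_less)
  next
    assume "\<forall>i<?n. att (cs ! i) (cs ! (Suc i mod ?n))"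
    then show "att (cs ! (?n - 1)) (cs ! 0)"
      using False by (metis One_nat_def Suc_pred length_greater_0_conv lessI mod_self)
  next
    fix i assume "\<forall>i. Suc i < ?n \<longrightarrow> att (cs ! i) (cs ! Suc i)" "att (cs ! (?n - 1)) (cs ! 0)"
      and "i < ?n"
    moreover have "i = ?n - 1 \<and> Suc i mod ?n = 0 \<or> Suc i < ?n"
      using \<open>i < ?n\<close> by (metis Suc_lessI mod_self diff_Suc_1)
    ultimately show "att (cs ! i) (cs ! (Suc i mod ?n))"
      by auto
  qed
  then show ?thesis
    using False by (simp add: is_cycle_def successively_conv_nth hd_conv_nth last_conv_nth)
qed (simp add: is_cycle_def)

lemma is_cycle_shortcut:
  "is_cycle att (a # b # c # cs) \<Longrightarrow> att a c \<Longrightarrow> is_cycle att (a # c # cs)"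
  by (simp add: is_cycle_iff_successively)

lemma terminal_cycles_length_2:
  assumes irrefl: "\<And>x. \<not> att x x"
    and converse: "\<And>a b c. att a b \<Longrightarrow> att b c \<Longrightarrow> a \<noteq> c \<Longrightarrow> \<not> att a c \<Longrightarrow> att b a"
    and terminal: "\<And>cs. is_cycle att cs \<Longrightarrow> terminal_cycle att cs"
    and cyc: "is_cycle att cs"
  shows "length cs = 2"
proof (rule ccontr)
  have leaves: "G \<in> set cs'" if "is_cycle att cs'" "F \<in> set cs'" "att F G" for cs' F G
    using terminal that unfolding terminal_cycle_def by blast
  assume "length cs \<noteq> 2"
  moreover have "cs \<noteq> [a]" for a
    using cyc irrefl by (auto simp: is_cycle_iff_successively)
  ultimately obtain a b c rest where cs: "cs = a # b # c # rest"
    using cyc by (cases cs; cases "tl cs"; cases "tl (tl cs)") (auto simp: is_cycle_def)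
  have ab: "att a b" and bc: "att b c" and "a \<noteq> c"
    and "b \<notin> set (a # c # rest)" and "c \<notin> set [a, b]"
    using cyc unfolding cs is_cycle_iff_successively by auto
  consider "att b a" | "att a c"
    using converse[OF ab bc \<open>a \<noteq> c\<close>] by blast
  then show False
  proof cases
    case 1
    then have "is_cycle att [a, b]"
      using ab irrefl by (auto simp: is_cycle_iff_successively)
    then have "c \<in> set [a, b]" by (rule leaves[where F = b]) (simp_all add: bc)
    with \<open>c \<notin> set [a, b]\<close> show False by contradiction
  next
    case 2
    then have "is_cycle att (a # c # rest)"
      using cyc unfolding cs by (rule is_cycle_shortcut[rotated])
    then have "b \<in> set (a # c # rest)" by (rule leaves[where F = a]) (simp_all add: ab)
    with \<open>b \<notin> set (a # c # rest)\<close> show False by contradiction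
  qed
qed

theorem lemma6:
  fixes sig :: "'r signature" and q :: "('r, 'v, 'c) atom set"
    and E :: "('r, 'v, 'c) atom set set"
  assumes "bcq sig q"
    and "join_tree q E"
    and "\<forall>cs. is_cycle (attacks sig q E) cs \<longrightarrow> terminal_cycle (attacks sig q E) cs"
  shows "\<forall>cs. is_cycle (attacks sig q E) cs \<longrightarrow> length cs = 2"
proof (intro allI impI)
  fix cs assume "is_cycle (attacks sig q E) cs"
  then show "length cs = 2"
  proof (rule terminal_cycles_length_2[rotated 3])
    show "\<not> attacks sig q E F F" for F
      by (simp add: attacks_def)
    show "attacks sig q E G F"
      if "attacks sig q E F G" "attacks sig q E G H" "F \<noteq> H" "\<not> attacks sig q E F H" for F G H
      using attacks_converse_if_not_transitive[OF assms(2) that] .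
  qed (use assms(3) in blast)
qed

end
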